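(* There exist $p,k,E$ and source covariance matrices $\Sigma_1,\dots,\Sigma_E$ such that every matrix $V^{\mathrm{seq}}=[v_1,\dots,v_k]$ produced by the sequential procedure $v_1\in\arg\max_{\|v\|=1}\min_{e\in\mathcal{E}}\mathcal{L}_{\mathrm{normVar}}(v;\Sigma_e)$, and for $2\le j\le k$, $v_j\in\arg\max\{\min_{e}\mathcal{L}_{\mathrm{normVar}}([v_1,\dots,v_{j-1},v];\Sigma_e): \|v\|=1,\ v\perp v_i\ \forall i<j\}$, fails to solve rank-$k$ norm-minPCA.
   Context: $\mathcal{O}_{p\times k}=\{V\in\mathbb{R}^{p\times k}:V^\top V=I_k\}$; source domains $\mathcal{E}=\{1,\dots,E\}$ with symmetric positive semidefinite covariances $\Sigma_e$ of positive trace. $\mathcal{L}_{\mathrm{normVar}}(V;\Sigma)=\operatorname{Tr}(V^\top\Sigma V)/\operatorname{Tr}(\Sigma)$. $V^*$ solves rank-$k$ norm-minPCA if $V^*\in\arg\max_{V\in\mathcal{O}_{p\times k}}\min_{e\in\mathcal{E}}\mathcal{L}_{\mathrm{normVar}}(V;\Sigma_e)$. *)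

theory Defs
  imports "Jordan_Normal_Form.Matrix"
begin

definition mtrace :: "real mat \<Rightarrow> real" where
  "mtrace A = (\<Sum>i<dim_row A. A $$ (i, i))"

definition sym_psd :: "nat \<Rightarrow> real mat \<Rightarrow> bool" where
  "sym_psd p S \<longleftrightarrow> S \<in> carrier_mat p p \<and> transpose_mat S = S \<and>
     (\<forall>x \<in> carrier_vec p. 0 \<le> x \<bullet> (S *\<^sub>v x))"

definition stiefel :: "nat \<Rightarrow> nat \<Rightarrow> real mat set" where
  "stiefel p k = {V \<in> carrier_mat p k. transpose_mat V * V = 1\<^sub>m k}"

definition normVar :: "real mat \<Rightarrow> real mat \<Rightarrow> real" where
  "normVar V S = mtrace (transpose_mat V * S * V) / mtrace S"

definition minNormVar :: "nat \<Rightarrow> (nat \<Rightarrow> real mat) \<Rightarrow> real mat \<Rightarrow> real" where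
  "minNormVar E Sig V = Min ((\<lambda>e. normVar V (Sig e)) ` {1..E})"

definition normMinPCA_sol :: "nat \<Rightarrow> nat \<Rightarrow> nat \<Rightarrow> (nat \<Rightarrow> real mat) \<Rightarrow> real mat \<Rightarrow> bool" where
  "normMinPCA_sol p k E Sig V \<longleftrightarrow> V \<in> stiefel p k \<and>
     (\<forall>W \<in> stiefel p k. minNormVar E Sig W \<le> minNormVar E Sig V)"

text \<open>V = [v_1,...,v_k] (columns col V 0, ..., col V (k-1)) is produced by the
  sequential procedure: for each j < k, column j (i.e. v_{j+1}) is a unit vector
  orthogonal to the previous columns that maximises the worst-case objective of
  [v_1,...,v_j, v] among all such unit vectors v. (For j = 0 this is
  v_1 in argmax over unit vectors of the objective of the p x 1 matrix [v].)\<close>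
definition seq_feasible :: "nat \<Rightarrow> real mat \<Rightarrow> nat \<Rightarrow> real vec \<Rightarrow> bool" where
  "seq_feasible p V j v \<longleftrightarrow> v \<in> carrier_vec p \<and> v \<bullet> v = 1 \<and>
     (\<forall>i<j. v \<bullet> col V i = 0)"

definition seq_solution :: "nat \<Rightarrow> nat \<Rightarrow> nat \<Rightarrow> (nat \<Rightarrow> real mat) \<Rightarrow> real mat \<Rightarrow> bool" where
  "seq_solution p k E Sig V \<longleftrightarrow> V \<in> carrier_mat p k \<and>
     (\<forall>j<k. seq_feasible p V j (col V j) \<and>
        (\<forall>v. seq_feasible p V j v \<longrightarrow>
           minNormVar E Sig (mat_of_cols p (map (col V) [0..<j] @ [v]))
             \<le> minNormVar E Sig (mat_of_cols p (map (col V) [0..<Suc j]))))"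

end

theory Submission
  imports Defs
begin

(* Both domains have trace 50.  A unit vector x explains at most 20/50 in the worse domain,
   with equality only at x = +-e1, since the two quadratic forms sum to
   40 |x|^2 - 15 x1^2 - 5 x2^2.  So the sequential procedure must take v1 = +-e1; then v2 is
   orthogonal to e1 and the first domain explains at most (20 + 16)/50 in total.  Tilting the
   first direction to (40, 9, 0)/41 and pairing it with e3 explains more than 36/50 in both
   domains.  The statement is not vacuous: [e1, e3] is a sequential solution. *)

lemma sum_lessThan_3: "(\<Sum>i<3::nat. f i) = f 0 + f 1 + (f 2 :: 'a :: comm_monoid_add)"
  by (simp add: numeral_3_eq_3 numeral_2_eq_2 add.assoc)

lemma sum_atLeast0_lessThan_3:
  "(\<Sum>i\<in>{0..<3::nat}. f i) = f 0 + f 1 + (f 2 :: 'a :: comm_monoid_add)"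
  by (simp add: numeral_3_eq_3 numeral_2_eq_2 add.assoc)

lemma scalar_prod_carrier_vec_3:
  "x \<in> carrier_vec 3 \<Longrightarrow> y \<in> carrier_vec 3 \<Longrightarrow>
    x \<bullet> y = x$0 * y$0 + x$1 * y$1 + x$2 * y$2"
  by (simp add: scalar_prod_def sum_atLeast0_lessThan_3)

lemma stiefel_iff_orthonormal_cols:
  assumes V: "V \<in> carrier_mat p k"
  shows "V \<in> stiefel p k \<longleftrightarrow>
    (\<forall>i<k. \<forall>j<k. col V i \<bullet> col V j = (if i = j then 1 else 0))"
proof -
  have entry: "(transpose_mat V * V) $$ (i, j) = col V i \<bullet> col V j"
    if "i < k" "j < k" for i j
    using V that by simp
  show ?thesis
  proof
    assume "V \<in> stiefel p k"
    then have orth: "transpose_mat V * V = 1\<^sub>m k" by (simp add: stiefel_def)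
    show "\<forall>i<k. \<forall>j<k. col V i \<bullet> col V j = (if i = j then 1 else 0)"
    proof (intro allI impI)
      fix i j assume ij: "i < k" "j < k"
      have "col V i \<bullet> col V j = (transpose_mat V * V) $$ (i, j)" using entry[OF ij] by simp
      also have "\<dots> = (if i = j then 1 else 0)" using orth ij by simp
      finally show "col V i \<bullet> col V j = (if i = j then 1 else 0)" .
    qed
  next
    assume "\<forall>i<k. \<forall>j<k. col V i \<bullet> col V j = (if i = j then 1 else 0)"
    then show "V \<in> stiefel p k"
      unfolding stiefel_def using V entry by (auto intro!: eq_matI)
  qed
qed

lemma mtrace_transpose_mult_mult:
  assumes V: "V \<in> carrier_mat p k" and S: "S \<in> carrier_mat p p"
  shows "mtrace (transpose_mat V * S * V) = (\<Sum>j<k. col V j \<bullet> (S *\<^sub>v col V j))"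
proof -
  have "transpose_mat V * S * V = transpose_mat V * (S * V)"
    using V S by (intro assoc_mult_mat) auto
  then show ?thesis
    unfolding mtrace_def using V S by (auto intro: sum.cong simp: mult_mat_vec_def)
qed

lemma normVar_mat_of_cols_single:
  "x \<in> carrier_vec p \<Longrightarrow> S \<in> carrier_mat p p \<Longrightarrow>
    normVar (mat_of_cols p [x]) S = x \<bullet> (S *\<^sub>v x) / mtrace S"
  unfolding normVar_def by (subst mtrace_transpose_mult_mult[where k = 1]) auto

lemma normVar_two_cols:
  "V \<in> carrier_mat p 2 \<Longrightarrow> S \<in> carrier_mat p p \<Longrightarrow>
    normVar V S = (col V 0 \<bullet> (S *\<^sub>v col V 0) + col V 1 \<bullet> (S *\<^sub>v col V 1)) / mtrace S"
  unfolding normVar_def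
  by (subst mtrace_transpose_mult_mult[where k = 2]) (auto simp: numeral_2_eq_2)

lemma minNormVar_two_domains:
  "minNormVar 2 Sig V = min (normVar V (Sig 1)) (normVar V (Sig 2))"
proof -
  have "{1..2::nat} = {1, 2}" by auto
  then show ?thesis unfolding minNormVar_def by simp
qed

lemma seq_solution_col_feasible:
  "seq_solution p k E Sig V \<Longrightarrow> j < k \<Longrightarrow> seq_feasible p V j (col V j)"
  unfolding seq_solution_def by blast

lemma seq_solution_first_col_optimal:
  assumes "seq_solution p k E Sig V" and "0 < k" and "u \<in> carrier_vec p" and "u \<bullet> u = 1"
  shows "minNormVar E Sig (mat_of_cols p [u]) \<le> minNormVar E Sig (mat_of_cols p [col V 0])"
proof -
  have "seq_feasible p V 0 u" using assms(3,4) by (simp add: seq_feasible_def)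
  then show ?thesis using assms(1,2) unfolding seq_solution_def by fastforce
qed

definition Sigma1 :: "real mat" where
  "Sigma1 = mat_of_rows_list 3 [[20, 5, 0], [5, 14, 0], [0, 0, 16]]"

definition Sigma2 :: "real mat" where
  "Sigma2 = mat_of_rows_list 3 [[20, -5, 0], [-5, 11, 0], [0, 0, 19]]"

definition Sigma :: "nat \<Rightarrow> real mat" where
  "Sigma e = (if e = 1 then Sigma1 else Sigma2)"

lemma Sigma1_carrier: "Sigma1 \<in> carrier_mat 3 3"
  by (simp add: Sigma1_def mat_of_rows_list_def numeral_3_eq_3)

lemma Sigma2_carrier: "Sigma2 \<in> carrier_mat 3 3"
  by (simp add: Sigma2_def mat_of_rows_list_def numeral_3_eq_3)

lemma mtrace_Sigma1: "mtrace Sigma1 = 50"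
  by (simp add: Sigma1_def mat_of_rows_list_def mtrace_def sum_lessThan_3)

lemma mtrace_Sigma2: "mtrace Sigma2 = 50"
  by (simp add: Sigma2_def mat_of_rows_list_def mtrace_def sum_lessThan_3)

lemma quadratic_form_Sigma1:
  "x \<in> carrier_vec 3 \<Longrightarrow>
    x \<bullet> (Sigma1 *\<^sub>v x) = 20 * (x$0)\<^sup>2 + 10 * x$0 * x$1 + 14 * (x$1)\<^sup>2 + 16 * (x$2)\<^sup>2"
  by (simp add: scalar_prod_def Sigma1_def mat_of_rows_list_def sum_atLeast0_lessThan_3
      numeral_2_eq_2 power2_eq_square algebra_simps)

lemma quadratic_form_Sigma2:
  "x \<in> carrier_vec 3 \<Longrightarrow>
    x \<bullet> (Sigma2 *\<^sub>v x) = 20 * (x$0)\<^sup>2 - 10 * x$0 * x$1 + 11 * (x$1)\<^sup>2 + 19 * (x$2)\<^sup>2"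
  by (simp add: scalar_prod_def Sigma2_def mat_of_rows_list_def sum_atLeast0_lessThan_3
      numeral_2_eq_2 power2_eq_square algebra_simps)

lemma sym_psd_Sigma1: "sym_psd 3 Sigma1"
  unfolding sym_psd_def
proof (intro conjI Sigma1_carrier ballI)
  show "transpose_mat Sigma1 = Sigma1"
      by (rule eq_matI) (auto simp: Sigma1_def mat_of_rows_list_def less_Suc_eq numeral_3_eq_3)
  fix x :: "real vec" assume "x \<in> carrier_vec 3"
  moreover have "20 * a\<^sup>2 + 10 * a * b + 14 * b\<^sup>2 + 16 * c\<^sup>2
      = 20 * (a + b / 4)\<^sup>2 + 51 / 4 * b\<^sup>2 + 16 * c\<^sup>2"
    for a b c :: real
    by (simp add: power2_eq_square algebra_simps)
  ultimately show "0 \<le> x \<bullet> (Sigma1 *\<^sub>v x)" by (simp add: quadratic_form_Sigma1)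
qed

lemma sym_psd_Sigma2: "sym_psd 3 Sigma2"
  unfolding sym_psd_def
proof (intro conjI Sigma2_carrier ballI)
  show "transpose_mat Sigma2 = Sigma2"
    by (rule eq_matI) (auto simp: Sigma2_def mat_of_rows_list_def less_Suc_eq numeral_3_eq_3)
  fix x :: "real vec" assume "x \<in> carrier_vec 3"
  moreover have "20 * a\<^sup>2 - 10 * a * b + 11 * b\<^sup>2 + 19 * c\<^sup>2
      = 20 * (a - b / 4)\<^sup>2 + 39 / 4 * b\<^sup>2 + 19 * c\<^sup>2"
    for a b c :: real
    by (simp add: power2_eq_square algebra_simps)
  ultimately show "0 \<le> x \<bullet> (Sigma2 *\<^sub>v x)" by (simp add: quadratic_form_Sigma2)
qed

lemma minNormVar_Sigma_single:
  "x \<in> carrier_vec 3 \<Longrightarrow> minNormVar 2 Sigma (mat_of_cols 3 [x]) =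
    min ((20 * (x$0)\<^sup>2 + 10 * x$0 * x$1 + 14 * (x$1)\<^sup>2 + 16 * (x$2)\<^sup>2) / 50)
        ((20 * (x$0)\<^sup>2 - 10 * x$0 * x$1 + 11 * (x$1)\<^sup>2 + 19 * (x$2)\<^sup>2) / 50)"
  by (simp add: minNormVar_two_domains Sigma_def normVar_mat_of_cols_single Sigma1_carrier
      Sigma2_carrier mtrace_Sigma1 mtrace_Sigma2 quadratic_form_Sigma1 quadratic_form_Sigma2)

lemma minNormVar_Sigma_two_cols:
  "V \<in> carrier_mat 3 2 \<Longrightarrow> minNormVar 2 Sigma V = min
    ((col V 0 \<bullet> (Sigma1 *\<^sub>v col V 0) + col V 1 \<bullet> (Sigma1 *\<^sub>v col V 1)) / 50)
    ((col V 0 \<bullet> (Sigma2 *\<^sub>v col V 0) + col V 1 \<bullet> (Sigma2 *\<^sub>v col V 1)) / 50)"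
  by (simp add: minNormVar_two_domains Sigma_def normVar_two_cols Sigma1_carrier Sigma2_carrier
      mtrace_Sigma1 mtrace_Sigma2)

lemma minNormVar_Sigma_unit_vec_0: "minNormVar 2 Sigma (mat_of_cols 3 [unit_vec 3 0]) = 2 / 5"
  by (simp add: minNormVar_Sigma_single)

lemma minNormVar_Sigma_single_ge_imp_axis:
  assumes x: "x \<in> carrier_vec 3" and "x \<bullet> x = 1"
    and "2 / 5 \<le> minNormVar 2 Sigma (mat_of_cols 3 [x])"
  shows "x$1 = 0" and "x$2 = 0"
proof -
  have "(x$0)\<^sup>2 + (x$1)\<^sup>2 + (x$2)\<^sup>2 = 1"
    using assms(2) by (simp add: scalar_prod_carrier_vec_3[OF x x] power2_eq_square)
  moreover have "20 \<le> 20 * (x$0)\<^sup>2 + 10 * x$0 * x$1 + 14 * (x$1)\<^sup>2 + 16 * (x$2)\<^sup>2"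
    and "20 \<le> 20 * (x$0)\<^sup>2 - 10 * x$0 * x$1 + 11 * (x$1)\<^sup>2 + 19 * (x$2)\<^sup>2"
    using assms(3) by (simp_all add: minNormVar_Sigma_single[OF x])
  moreover have "0 \<le> (x$1)\<^sup>2" and "0 \<le> (x$2)\<^sup>2" by simp_all
  ultimately have "(x$1)\<^sup>2 = 0" and "(x$2)\<^sup>2 = 0" by linarith+
  then show "x$1 = 0" and "x$2 = 0" by simp_all
qed

lemma minNormVar_Sigma_seq_solution_le:
  assumes seq: "seq_solution 3 2 2 Sigma V"
  shows "minNormVar 2 Sigma V \<le> 36 / 50"
proof -
  define v w where "v = col V 0" and "w = col V 1"
  have V: "V \<in> carrier_mat 3 2" using seq by (simp add: seq_solution_def)
  have v: "v \<in> carrier_vec 3" "v \<bullet> v = 1"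
    and w: "w \<in> carrier_vec 3" "w \<bullet> w = 1" "w \<bullet> v = 0"
    using seq_solution_col_feasible[OF seq, of 0] seq_solution_col_feasible[OF seq, of 1]
    by (auto simp: seq_feasible_def v_def w_def)
  have "2 / 5 \<le> minNormVar 2 Sigma (mat_of_cols 3 [v])"
    using seq_solution_first_col_optimal[OF seq, of "unit_vec 3 0"]
    by (simp add: minNormVar_Sigma_unit_vec_0 v_def)
  then have v12: "v$1 = 0" "v$2 = 0"
    using minNormVar_Sigma_single_ge_imp_axis[OF v] by simp_all
  then have v0: "(v$0)\<^sup>2 = 1"
    using v by (simp add: scalar_prod_carrier_vec_3 power2_eq_square)
  have "w$0 * v$0 = 0"
    using w(3) unfolding scalar_prod_carrier_vec_3[OF w(1) v(1)] v12 by simp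
  then have w0: "w$0 = 0" using v0 by auto
  have w12: "(w$1)\<^sup>2 + (w$2)\<^sup>2 = 1"
    using w(2) by (simp add: scalar_prod_carrier_vec_3[OF w(1) w(1)] w0 power2_eq_square)
  have "v \<bullet> (Sigma1 *\<^sub>v v) + w \<bullet> (Sigma1 *\<^sub>v w)
      = 20 * (v$0)\<^sup>2 + 14 * (w$1)\<^sup>2 + 16 * (w$2)\<^sup>2"
    unfolding quadratic_form_Sigma1[OF v(1)] quadratic_form_Sigma1[OF w(1)] v12 w0 by simp
  also have "\<dots> \<le> 36"
    using v0 w12 zero_le_power2[of "w$1"] by linarith
  finally have "v \<bullet> (Sigma1 *\<^sub>v v) + w \<bullet> (Sigma1 *\<^sub>v w) \<le> 36" .
  then show ?thesis
    unfolding minNormVar_Sigma_two_cols[OF V] v_def [symmetric] w_def [symmetric]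
    by (simp add: min_def)
qed

definition tilted_direction :: "real vec" where
  "tilted_direction = vec 3 (\<lambda>i. [40 / 41, 9 / 41, 0] ! i)"

definition tilted_frame :: "real mat" where
  "tilted_frame = mat_of_cols 3 [tilted_direction, unit_vec 3 2]"

lemma tilted_frame_carrier: "tilted_frame \<in> carrier_mat 3 2"
  using mat_of_cols_carrier(1)[of 3 "[tilted_direction, unit_vec 3 2]"]
  by (simp add: tilted_frame_def numeral_2_eq_2)

lemma col_tilted_frame:
  "col tilted_frame 0 = tilted_direction" "col tilted_frame (Suc 0) = unit_vec 3 2"
  by (simp_all add: tilted_frame_def tilted_direction_def)

lemma tilted_frame_stiefel: "tilted_frame \<in> stiefel 3 2"
  unfolding stiefel_iff_orthonormal_cols[OF tilted_frame_carrier]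
  by (auto simp: less_2_cases_iff col_tilted_frame scalar_prod_carrier_vec_3
      tilted_direction_def)

lemma minNormVar_Sigma_tilted_frame: "36 / 50 < minNormVar 2 Sigma tilted_frame"
  by (simp add: minNormVar_Sigma_two_cols[OF tilted_frame_carrier] col_tilted_frame
      quadratic_form_Sigma1 quadratic_form_Sigma2 tilted_direction_def power2_eq_square)

theorem mainTheorem5:
  shows "\<exists>p k E (Sig :: nat \<Rightarrow> real mat).
           1 \<le> k \<and> k \<le> p \<and> 1 \<le> E \<and>
           (\<forall>e \<in> {1..E}. sym_psd p (Sig e) \<and> 0 < mtrace (Sig e)) \<and>
           (\<forall>V. seq_solution p k E Sig V \<longrightarrow> \<not> normMinPCA_sol p k E Sig V)"
proof (intro exI conjI)
  show "\<forall>e \<in> {1..2}. sym_psd 3 (Sigma e) \<and> 0 < mtrace (Sigma e)"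
    by (simp add: Sigma_def sym_psd_Sigma1 sym_psd_Sigma2 mtrace_Sigma1 mtrace_Sigma2)
  show "\<forall>V. seq_solution 3 2 2 Sigma V \<longrightarrow> \<not> normMinPCA_sol 3 2 2 Sigma V"
    using minNormVar_Sigma_seq_solution_le minNormVar_Sigma_tilted_frame tilted_frame_stiefel
    unfolding normMinPCA_sol_def by fastforce
qed auto

end
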